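(* Let $X$ be an abelian variety over a field $K$ of characteristic different from $2$, $G=\bar\rho_{2,X}(\mathrm{Gal}(K))\subset\mathrm{Aut}_{\mathbb F_2}(X_2)$, and assume $\dim X=2$, $G\cong\mathbb A_5$, $X_2$ is a simple $G$-module, and $\mathrm{End}_G(X_2)\cong\mathbb F_4$. Then $X_2$, viewed as a vector space over $\mathbb F_4=\mathrm{End}_G(X_2)$, is a very simple $G$-module over $\mathbb F_4$.
   Context: $X_2$ is the group of points of order dividing $2$ of $X$ over an algebraic closure of $K$, with Galois action $\bar\rho_{2,X}$. Definition: for a vector space $V$ over a field $k$ and a representation $\rho:G\to\mathrm{Aut}_k(V)$, the $G$-module $V$ is very simple if for every $k$-subalgebra $R\subset\mathrm{End}_k(V)$ containing $\mathrm{Id}_V$ with $\rho(\sigma)R\rho(\sigma)^{-1}\subset R$ for all $\sigma\in G$, either $R=k\cdot\mathrm{Id}_V$ or $R=\mathrm{End}_k(V)$. *)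

theory Defs
  imports "HOL-Algebra.Sym_Groups" "HOL-Algebra.Ring"
begin

text \<open>X_2 is modelled as an abelian group 'v (written additively) killed by 2,
  i.e. an F_2-vector space; F_2-linear maps are exactly additive maps.\<close>

definition additive :: "('v::ab_group_add \<Rightarrow> 'v) \<Rightarrow> bool" where
  "additive f \<longleftrightarrow> (\<forall>x y. f (x + y) = f x + f y)"

definition Aut_F2 :: "('v::ab_group_add \<Rightarrow> 'v) set" where
  "Aut_F2 = {f. bij f \<and> additive f}"

definition fun_group :: "('v \<Rightarrow> 'v) set \<Rightarrow> ('v \<Rightarrow> 'v) monoid" where
  "fun_group G = \<lparr>carrier = G, mult = (\<circ>), one = id\<rparr>"

definition is_subgroup_Aut :: "('v::ab_group_add \<Rightarrow> 'v) set \<Rightarrow> bool" where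
  "is_subgroup_Aut G \<longleftrightarrow> G \<subseteq> Aut_F2 \<and> id \<in> G \<and>
     (\<forall>g\<in>G. \<forall>h\<in>G. g \<circ> h \<in> G) \<and> (\<forall>g\<in>G. inv_into UNIV g \<in> G)"

text \<open>F_2-subspaces of V are exactly the subgroups.\<close>
definition F2_subspace :: "'v::ab_group_add set \<Rightarrow> bool" where
  "F2_subspace W \<longleftrightarrow> 0 \<in> W \<and> (\<forall>x\<in>W. \<forall>y\<in>W. x + y \<in> W) \<and> (\<forall>x\<in>W. - x \<in> W)"

definition simple_module :: "('v::ab_group_add \<Rightarrow> 'v) set \<Rightarrow> bool" where
  "simple_module G \<longleftrightarrow> (UNIV :: 'v set) \<noteq> {0} \<and>
     (\<forall>W. F2_subspace W \<and> (\<forall>g\<in>G. g ` W \<subseteq> W) \<longrightarrow> W = {0} \<or> W = UNIV)"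

definition End_G :: "('v::ab_group_add \<Rightarrow> 'v) set \<Rightarrow> ('v \<Rightarrow> 'v) set" where
  "End_G G = {f. additive f \<and> (\<forall>g\<in>G. f \<circ> g = g \<circ> f)}"

definition End_G_ring :: "('v::ab_group_add \<Rightarrow> 'v) set \<Rightarrow> ('v \<Rightarrow> 'v) ring" where
  "End_G_ring G = \<lparr>carrier = End_G G, mult = (\<circ>), one = id,
                   zero = (\<lambda>_. 0), add = (\<lambda>f h x. f x + h x)\<rparr>"

text \<open>Very simple modules. K is a field (record), sc its scalar action on V,
  G a set of invertible (K-linear) maps giving the representation.\<close>
definition End_K :: "('k, 'm) ring_scheme \<Rightarrow> ('k \<Rightarrow> 'v::ab_group_add \<Rightarrow> 'v) \<Rightarrow> ('v \<Rightarrow> 'v) set" where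
  "End_K K sc = {f. additive f \<and> (\<forall>c\<in>carrier K. \<forall>x. f (sc c x) = sc c (f x))}"

definition K_subalgebra :: "('k, 'm) ring_scheme \<Rightarrow> ('k \<Rightarrow> 'v::ab_group_add \<Rightarrow> 'v)
    \<Rightarrow> ('v \<Rightarrow> 'v) set \<Rightarrow> bool" where
  "K_subalgebra K sc R \<longleftrightarrow> R \<subseteq> End_K K sc \<and> id \<in> R \<and>
     (\<forall>r\<in>R. \<forall>s\<in>R. (\<lambda>x. r x + s x) \<in> R) \<and>
     (\<forall>c\<in>carrier K. \<forall>r\<in>R. (\<lambda>x. sc c (r x)) \<in> R) \<and>
     (\<forall>r\<in>R. \<forall>s\<in>R. r \<circ> s \<in> R)"

definition very_simple :: "('k, 'm) ring_scheme \<Rightarrow> ('k \<Rightarrow> 'v::ab_group_add \<Rightarrow> 'v)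
    \<Rightarrow> ('v \<Rightarrow> 'v) set \<Rightarrow> bool" where
  "very_simple K sc G \<longleftrightarrow>
     (\<forall>R. K_subalgebra K sc R \<and> (\<forall>g\<in>G. \<forall>r\<in>R. g \<circ> r \<circ> inv_into UNIV g \<in> R) \<longrightarrow>
        R = {(\<lambda>x. sc c x) | c. c \<in> carrier K} \<or> R = End_K K sc)"

end

theory Submission
  imports Defs
begin

text \<open>Let \<open>F = End_G(V)\<close>, over which \<open>V\<close> is a plane, and let \<open>R \<noteq> F\<close> be an
  \<open>F\<close>-subalgebra of \<open>End_F(V)\<close> normalised by \<open>G\<close>. A non-scalar element of \<open>R\<close> has at
  most two eigenlines, so there are at most two \<open>R\<close>-stable lines; \<open>G\<close> permutes them, and a
  perfect group acting on at most two points acts trivially, so a stable line would be a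
  \<open>G\<close>-submodule. Hence \<open>V\<close> is a simple \<open>R\<close>-module and, by Schur, its commutant is a
  division algebra whose elements satisfy quadratic equations over \<open>F\<close>. If \<open>f\<close> is a
  non-scalar element of the commutant with \<open>f\<^sup>2 = p + q f\<close>, then \<open>G\<close> permutes the two
  roots \<open>f\<close> and \<open>q + f\<close>, hence fixes \<open>f\<close>, so \<open>f \<in> End_G(V) = F\<close>. Density in
  dimension two then gives \<open>R = End_F(V)\<close>.\<close>

section \<open>Perfect groups acting on at most two points\<close>

lemma subset_doubleton_if_card_le_2:
  assumes "finite X" "card X \<le> 2"
  obtains a b where "X \<subseteq> {a, b}"
proof (cases "X = {}")
  case False
  then obtain a where a: "a \<in> X" by blast
  show ?thesis
  proof (cases "X - {a} = {}")
    case True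
    then show ?thesis using that[of a a] by blast
  next
    case False
    then obtain b where b: "b \<in> X - {a}" by blast
    have "card (X - {a}) \<le> Suc 0" using a assms by simp
    then have "X - {a} \<subseteq> {b}"
      using card_le_Suc0_iff_eq[of "X - {a}"] assms(1) b by auto
    then show ?thesis using that[of a b] by blast
  qed
qed blast

lemma bij_betw_card_le_2_commute:
  assumes "finite X" "card X \<le> 2" "bij_betw p X X" "bij_betw q X X" "x \<in> X"
  shows "p (q x) = q (p x)"
proof -
  obtain a b where X: "X \<subseteq> {a, b}" using subset_doubleton_if_card_le_2[OF assms(1,2)] .
  have maps: "p ` X = X" "q ` X = X" and inj: "inj_on p X" "inj_on q X"
    using assms(3,4) by (auto simp: bij_betw_def)
  show ?thesis
  proof (cases "X = {a, b} \<and> a \<noteq> b")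
    case True
    then have "p a \<in> {a, b}" "p b \<in> {a, b}" "q a \<in> {a, b}" "q b \<in> {a, b}"
      "p a \<noteq> p b" "q a \<noteq> q b"
      using maps inj by (auto simp: inj_on_def)
    then show ?thesis using True assms(5) by auto
  next
    case False
    then obtain c where c: "X \<subseteq> {c}" using X by blast
    have "p (q x) \<in> X" "q (p x) \<in> X" using maps assms(5) by blast+
    then show ?thesis using c by blast
  qed
qed

text \<open>A perfect group has no nontrivial abelian quotient, and the permutations of a set
  with at most two elements commute.\<close>

lemma (in group) perfect_action_on_card_le_2_trivial:
  assumes perfect: "derived G (carrier G) = carrier G"
    and X: "finite X" "card X \<le> 2"
    and closed: "\<And>g x. g \<in> carrier G \<Longrightarrow> x \<in> X \<Longrightarrow> \<alpha> g x \<in> X"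
    and mult: "\<And>g h x. g \<in> carrier G \<Longrightarrow> h \<in> carrier G \<Longrightarrow> x \<in> X \<Longrightarrow>
      \<alpha> (g \<otimes> h) x = \<alpha> g (\<alpha> h x)"
    and one: "\<And>x. x \<in> X \<Longrightarrow> \<alpha> \<one> x = x"
    and "g \<in> carrier G" "x \<in> X"
  shows "\<alpha> g x = x"
proof -
  have inv_cancel: "\<alpha> (inv g) (\<alpha> g x) = x" "\<alpha> g (\<alpha> (inv g) x) = x"
    if "g \<in> carrier G" "x \<in> X" for g x
    using mult[of "inv g" g x] mult[of g "inv g" x] one that closed by simp_all
  have bij: "bij_betw (\<alpha> g) X X" if "g \<in> carrier G" for g
    by (rule bij_betw_byWitness[where f' = "\<alpha> (inv g)"]) (use that closed inv_cancel in auto)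
  define H where "H = {g \<in> carrier G. \<forall>x\<in>X. \<alpha> g x = x}"
  have "subgroup H G"
  proof (rule subgroupI)
    show "H \<subseteq> carrier G" "H \<noteq> {}" using one by (auto simp: H_def)
    show "inv h \<in> H" if "h \<in> H" for h
      using that inv_cancel(1)[of h] by (auto simp: H_def)
    show "h \<otimes> k \<in> H" if "h \<in> H" "k \<in> H" for h k
      using that mult by (auto simp: H_def)
  qed
  moreover have "derived_set G (carrier G) \<subseteq> H"
  proof safe
    fix a b assume ab: "a \<in> carrier G" "b \<in> carrier G"
    have "\<alpha> (a \<otimes> b \<otimes> inv a \<otimes> inv b) y = y" if y: "y \<in> X" for y
    proof -
      have "\<alpha> (a \<otimes> b \<otimes> inv a \<otimes> inv b) y = \<alpha> a (\<alpha> b (\<alpha> (inv a) (\<alpha> (inv b) y)))"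
        using ab y closed by (simp add: mult)
      also have "\<dots> = \<alpha> a (\<alpha> (inv a) (\<alpha> b (\<alpha> (inv b) y)))"
        using bij_betw_card_le_2_commute[OF X bij bij, of b "inv a" "\<alpha> (inv b) y"] ab y closed
        by simp
      also have "\<dots> = y"
        using ab y closed by (simp add: inv_cancel)
      finally show ?thesis .
    qed
    then show "a \<otimes> b \<otimes> inv a \<otimes> inv b \<in> H"
      using ab by (simp add: H_def)
  qed
  ultimately have "derived G (carrier G) \<subseteq> H"
    unfolding derived_def by (rule generate_subgroup_incl[rotated])
  then show ?thesis using perfect assms(7,8) by (auto simp: H_def)
qed

lemma perfect_if_iso_perfect:
  assumes "group G" "group H" "G \<cong> H" "derived H (carrier H) = carrier H"
  shows "derived G (carrier G) = carrier G"
proof -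
  interpret G: group G by (rule assms(1))
  obtain h where h: "h \<in> iso G H" using assms(3) unfolding is_iso_def by blast
  interpret group_hom G H h
    using h assms(1,2) by (auto simp: group_hom_def group_hom_axioms_def iso_iff)
  have bij: "bij_betw h (carrier G) (carrier H)" using h by (simp add: iso_def)
  then have "h ` derived G (carrier G) = h ` carrier G"
    using derived_img[of "carrier G"] assms(4) by (simp add: bij_betw_def)
  moreover have "derived G (carrier G) \<subseteq> carrier G"
    by (rule G.derived_in_carrier) simp
  ultimately show ?thesis
    using inj_on_image_eq_iff[of h "carrier G" "derived G (carrier G)" "carrier G"] bij
    by (simp add: bij_betw_def)
qed

lemma group_fun_group:
  assumes "is_subgroup_Aut G"
  shows "group (fun_group G)"
proof (rule groupI)
  fix x assume "x \<in> carrier (fun_group G)"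
  then have "x \<in> G" "inv_into UNIV x \<in> G" "bij x"
    using assms by (auto simp: fun_group_def is_subgroup_Aut_def Aut_F2_def)
  then show "\<exists>y\<in>carrier (fun_group G). y \<otimes>\<^bsub>fun_group G\<^esub> x = \<one>\<^bsub>fun_group G\<^esub>"
    by (intro bexI[of _ "inv_into UNIV x"]) (auto simp: fun_group_def bij_def inv_o_cancel)
qed (use assms in \<open>auto simp: fun_group_def is_subgroup_Aut_def\<close>)


section \<open>Rings of endomorphisms and Schur's lemma\<close>

definition endo_ring :: "('v::ab_group_add \<Rightarrow> 'v) set \<Rightarrow> ('v \<Rightarrow> 'v) ring" where
  "endo_ring F = \<lparr>carrier = F, mult = (\<circ>), one = id, zero = (\<lambda>_. 0), add = (\<lambda>f h x. f x + h x)\<rparr>"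

lemma End_G_ring_eq_endo_ring: "End_G_ring G = endo_ring (End_G G)"
  by (simp add: End_G_ring_def endo_ring_def)

lemma End_K_endo_ring: "End_K (endo_ring F) (\<lambda>e v. e v) = End_G F"
  by (auto simp: End_K_def End_G_def endo_ring_def fun_eq_iff)

lemma mem_End_G_iff: "f \<in> End_G M \<longleftrightarrow> additive f \<and> (\<forall>r\<in>M. \<forall>x. f (r x) = r (f x))"
  by (auto simp: End_G_def fun_eq_iff)

lemma additive_apply: "additive f \<Longrightarrow> f (x + y) = f x + f y"
  by (simp add: additive_def)

lemma additive_zero: "additive f \<Longrightarrow> f 0 = 0"
  unfolding additive_def by (metis add_cancel_right_right)

lemma End_G_comp: "f \<in> End_G M \<Longrightarrow> h \<in> End_G M \<Longrightarrow> f \<circ> h \<in> End_G M"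
  by (simp add: mem_End_G_iff additive_def)

lemma End_G_add:
  assumes "\<And>r. r \<in> M \<Longrightarrow> additive r" "f \<in> End_G M" "h \<in> End_G M"
  shows "(\<lambda>x. f x + h x) \<in> End_G M"
  using assms by (simp add: mem_End_G_iff additive_def algebra_simps)

text \<open>Schur's lemma: the image of an endomorphism of a simple module is a submodule.\<close>

lemma simple_module_End_G_surj:
  assumes "simple_module M" "f \<in> End_G M" "f \<noteq> (\<lambda>_. 0)"
  shows "surj f"
proof -
  have add: "additive f" using assms(2) by (simp add: mem_End_G_iff)
  have "F2_subspace (range f)"
    unfolding F2_subspace_def
  proof (intro conjI ballI)
    show "0 \<in> range f" using additive_zero[OF add] by (metis rangeI)
    fix a b assume "a \<in> range f" "b \<in> range f"
    then obtain x y where "a = f x" "b = f y" by blast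
    moreover have "f x + f y = f (x + y)" "- f x = f (- x)"
      using additive_apply[OF add, of x y] additive_apply[OF add, of x "- x"] additive_zero[OF add]
      by (simp_all add: neg_eq_iff_add_eq_0)
    ultimately show "a + b \<in> range f" "- a \<in> range f" by simp_all
  qed
  moreover have "\<forall>r\<in>M. r ` range f \<subseteq> range f"
  proof (intro ballI subsetI)
    fix r y assume "r \<in> M" "y \<in> r ` range f"
    then obtain x where "y = r (f x)" by blast
    then show "y \<in> range f" using assms(2) \<open>r \<in> M\<close> by (metis mem_End_G_iff rangeI)
  qed
  moreover have "range f \<noteq> {0}" using assms(3) by auto
  ultimately show ?thesis using assms(1) unfolding simple_module_def by blast
qed


section \<open>Planes over a field of endomorphisms\<close>

text \<open>The \<open>F\<close>-linear endomorphisms of the plane are the maps commuting with \<open>F\<close>,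
  that is \<open>End_G F\<close>; likewise \<open>End_G R\<close> below is the commutant of \<open>R\<close>.\<close>

locale F2_plane =
  fixes F :: "('v::ab_group_add \<Rightarrow> 'v) set"
  assumes char_two: "\<And>x::'v. x + x = 0"
    and field_F: "field (endo_ring F)"
    and additive_F: "\<And>a. a \<in> F \<Longrightarrow> additive a"
    and finite_F: "finite F"
    and card_UNIV: "card (UNIV :: 'v set) = card F ^ 2"
begin

lemma add_eq_0_iff_eq: "(x::'v) + y = 0 \<longleftrightarrow> x = y"
  by (metis add.assoc add.right_neutral char_two)

lemma uminus_eq_self [simp]: "- (x::'v) = x"
  using char_two by (simp add: neg_eq_iff_add_eq_0)

lemma add_self_left [simp]: "(x::'v) + (x + y) = y"
  by (metis add.assoc add.left_neutral char_two)

lemma id_in_F: "id \<in> F" and zero_in_F: "(\<lambda>_. 0) \<in> F" and id_neq_zero: "id \<noteq> (\<lambda>_. 0 :: 'v)"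
  and add_in_F: "a \<in> F \<Longrightarrow> b \<in> F \<Longrightarrow> (\<lambda>x. a x + b x) \<in> F"
  and comp_in_F: "a \<in> F \<Longrightarrow> b \<in> F \<Longrightarrow> a \<circ> b \<in> F"
proof -
  interpret field "endo_ring F" by (rule field_F)
  show "id \<in> F" "(\<lambda>_. 0) \<in> F" "id \<noteq> (\<lambda>_. 0 :: 'v)"
    using one_closed zero_closed one_not_zero by (simp_all add: endo_ring_def)
  show "a \<in> F \<Longrightarrow> b \<in> F \<Longrightarrow> (\<lambda>x. a x + b x) \<in> F" "a \<in> F \<Longrightarrow> b \<in> F \<Longrightarrow> a \<circ> b \<in> F"
    using a_closed[of a b] m_closed[of a b] by (simp_all add: endo_ring_def)
qed

lemma F_commute: "a \<in> F \<Longrightarrow> b \<in> F \<Longrightarrow> a (b x) = b (a x)"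
proof -
  interpret field "endo_ring F" by (rule field_F)
  show "a \<in> F \<Longrightarrow> b \<in> F \<Longrightarrow> a (b x) = b (a x)"
    using m_comm[of a b] by (simp add: endo_ring_def fun_eq_iff)
qed

lemma F_left_inverse:
  assumes "a \<in> F" "a \<noteq> (\<lambda>_. 0)"
  shows "\<exists>a'\<in>F. \<forall>x. a' (a x) = x"
proof -
  interpret field "endo_ring F" by (rule field_F)
  have "a \<in> Units (endo_ring F)" using assms field_Units by (simp add: endo_ring_def)
  then obtain a' where "a' \<in> F" "a' \<circ> a = id"
    using Units_l_inv_ex by (fastforce simp: endo_ring_def)
  then show ?thesis by (metis comp_apply id_apply)
qed

lemma F_cancel_left:
  assumes "a \<in> F" "a \<noteq> (\<lambda>_. 0)" "a \<circ> b = a \<circ> c"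
  shows "b = c"
proof
  fix x
  obtain a' where "\<forall>y. a' (a y) = y" using F_left_inverse[OF assms(1,2)] by blast
  then show "b x = c x" using fun_cong[OF assms(3), of x] by (metis comp_apply)
qed

lemma F_subset_End_G_F: "F \<subseteq> End_G F"
  using F_commute additive_F by (auto simp: mem_End_G_iff)

lemma card_F_ge_2: "2 \<le> card F"
proof -
  have "{id, \<lambda>_. 0} \<subseteq> F" using id_in_F zero_in_F by simp
  moreover have "card {id, \<lambda>_. 0 :: 'v} = 2" using id_neq_zero by simp
  ultimately show ?thesis using card_mono[OF finite_F] by metis
qed

lemma finite_UNIV_plane [simp]: "finite (UNIV :: 'v set)"
  by (rule card_ge_0_finite) (use card_UNIV card_F_ge_2 in simp)

lemma exists_nonzero: "\<exists>v::'v. v \<noteq> 0"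
  using id_neq_zero by (auto simp: fun_eq_iff)

definition line :: "'v \<Rightarrow> 'v set" where
  "line v = (\<lambda>a. a v) ` F"

lemma mem_line_iff: "w \<in> line v \<longleftrightarrow> (\<exists>a\<in>F. w = a v)"
  by (auto simp: line_def)

lemma scalar_in_line: "a \<in> F \<Longrightarrow> a v \<in> line v"
  by (auto simp: line_def)

lemma self_in_line: "v \<in> line v"
  using scalar_in_line[OF id_in_F] by simp

lemma line_neq_UNIV: "line v \<noteq> UNIV"
proof
  assume "line v = UNIV"
  then have "card (UNIV :: 'v set) \<le> card F"
    using card_image_le[OF finite_F, of "\<lambda>a. a v"] unfolding line_def by simp
  then show False using card_UNIV card_F_ge_2 by (simp add: power2_eq_square)
qed

lemma exists_not_in_line: "\<exists>w. w \<notin> line v"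
  using line_neq_UNIV by blast

lemma F2_subspace_line: "F2_subspace (line v)"
  unfolding F2_subspace_def
proof (intro conjI ballI)
  show "0 \<in> line v" using scalar_in_line[OF zero_in_F] by simp
  fix x y assume "x \<in> line v" "y \<in> line v"
  then obtain a b where "a \<in> F" "b \<in> F" "x = a v" "y = b v" by (auto simp: mem_line_iff)
  then show "x + y \<in> line v" "- x \<in> line v" using scalar_in_line[OF add_in_F] scalar_in_line by auto
qed

lemma scalar_eq_zero_if_kills:
  assumes "a \<in> F" "v \<noteq> 0" "a v = 0"
  shows "a = (\<lambda>_. 0)"
proof (rule ccontr)
  assume "a \<noteq> (\<lambda>_. 0)"
  then obtain a' where "a' \<in> F" "\<And>x. a' (a x) = x" using F_left_inverse[OF assms(1)] by blast
  then have "v = a' 0" using assms(3) by metis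
  also have "\<dots> = 0" using additive_zero additive_F \<open>a' \<in> F\<close> by blast
  finally show False using assms(2) by contradiction
qed

lemma line_eq_if_mem:
  assumes "w \<noteq> 0" "w \<in> line v"
  shows "line w = line v"
proof -
  obtain e where e: "e \<in> F" "w = e v" using assms(2) by (auto simp: mem_line_iff)
  have "e \<noteq> (\<lambda>_. 0)" using assms(1) e by auto
  then obtain e' where e': "e' \<in> F" "\<And>x. e' (e x) = x" using F_left_inverse[OF e(1)] by blast
  show ?thesis
  proof
    show "line w \<subseteq> line v"
    proof
      fix x assume "x \<in> line w"
      then obtain c where "c \<in> F" "x = (c \<circ> e) v" using e by (auto simp: mem_line_iff)
      then show "x \<in> line v" using comp_in_F[OF _ e(1)] scalar_in_line by blast
    qed
    show "line v \<subseteq> line w"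
    proof
      fix x assume "x \<in> line v"
      then obtain c where "c \<in> F" "x = (c \<circ> e') w" using e e' by (auto simp: mem_line_iff)
      then show "x \<in> line w" using comp_in_F[OF _ e'(1)] scalar_in_line by blast
    qed
  qed
qed

lemma coordinates_unique:
  assumes "v \<noteq> 0" "w \<notin> line v" "a \<in> F" "b \<in> F" "a' \<in> F" "b' \<in> F"
    and "a v + b w = a' v + b' w"
  shows "a = a'" "b = b'"
proof -
  define c d where "c = (\<lambda>x. a x + a' x)" and "d = (\<lambda>x. b x + b' x)"
  have cd: "c \<in> F" "d \<in> F" using assms(3-6) add_in_F by (simp_all add: c_def d_def)
  have "c v + d w = (a v + b w) + (a' v + b' w)"
    by (simp add: c_def d_def algebra_simps)
  then have cd_eq: "c v + d w = 0"
    using assms(7) add_eq_0_iff_eq by simp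
  have "d = (\<lambda>_. 0)"
  proof (rule ccontr)
    assume "d \<noteq> (\<lambda>_. 0)"
    then obtain d' where d': "d' \<in> F" "\<And>x. d' (d x) = x" using F_left_inverse cd(2) by blast
    have "d w = c v" using cd_eq add_eq_0_iff_eq by (simp add: add.commute)
    then have "w = (d' \<circ> c) v" using d'(2)[of w] by simp
    then show False using assms(2) scalar_in_line[OF comp_in_F[OF d'(1) cd(1)], of v] by simp
  qed
  moreover from this have "c = (\<lambda>_. 0)"
    using cd_eq scalar_eq_zero_if_kills[OF cd(1) assms(1)] by simp
  ultimately show "a = a'" "b = b'"
    by (auto simp: c_def d_def fun_eq_iff add_eq_0_iff_eq)
qed

lemma coordinates_exist:
  assumes "v \<noteq> 0" "w \<notin> line v"
  obtains a b where "a \<in> F" "b \<in> F" "x = a v + b w"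
proof -
  let ?m = "\<lambda>(a, b). a v + b w"
  have "inj_on ?m (F \<times> F)"
    using coordinates_unique[OF assms] by (auto simp: inj_on_def)
  then have "card (?m ` (F \<times> F)) = card (F \<times> F)" by (rule card_image)
  then have "card (?m ` (F \<times> F)) = card (UNIV :: 'v set)"
    using card_UNIV by (simp add: card_cartesian_product power2_eq_square)
  then have "?m ` (F \<times> F) = UNIV" by (intro card_subset_eq) auto
  then have "x \<in> ?m ` (F \<times> F)" by simp
  then obtain p where "x = ?m p" "p \<in> F \<times> F" by (rule imageE)
  then show ?thesis using that by (cases p) auto
qed

lemma End_G_F_eq_on_basis:
  assumes "v \<noteq> 0" "w \<notin> line v" "f \<in> End_G F" "h \<in> End_G F" "f v = h v" "f w = h w"
  shows "f = h"
proof
  fix x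
  obtain a b where ab: "a \<in> F" "b \<in> F" "x = a v + b w" using coordinates_exist[OF assms(1,2)] .
  show "f x = h x"
    using assms(3-6) ab by (simp add: mem_End_G_iff additive_apply)
qed

lemma image_line: "g \<in> End_G F \<Longrightarrow> g ` line v = line (g v)"
  unfolding line_def image_image by (intro image_cong) (auto simp: mem_End_G_iff)

lemma F_stable_subspace_eq_UNIV:
  assumes "F2_subspace W" "\<forall>a\<in>F. a ` W \<subseteq> W" "v \<in> W" "v \<noteq> 0" "\<not> W \<subseteq> line v"
  shows "W = UNIV"
proof -
  obtain w where w: "w \<in> W" "w \<notin> line v" using assms(5) by blast
  have "x \<in> W" for x
  proof -
    obtain a b where "a \<in> F" "b \<in> F" "x = a v + b w" using coordinates_exist[OF assms(4) w(2)] .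
    moreover have "a v \<in> W" "b w \<in> W" using assms(2,3) w(1) \<open>a \<in> F\<close> \<open>b \<in> F\<close> by blast+
    ultimately show ?thesis using assms(1) by (simp add: F2_subspace_def)
  qed
  then show ?thesis by blast
qed

lemma scalar_if_three_eigenlines:
  assumes r: "r \<in> End_G F"
    and nonzero: "v \<noteq> 0" "w \<noteq> 0" "u \<noteq> 0"
    and distinct: "line v \<noteq> line w" "line v \<noteq> line u" "line w \<noteq> line u"
    and eigen: "r v \<in> line v" "r w \<in> line w" "r u \<in> line u"
  shows "r \<in> F"
proof -
  have wv: "w \<notin> line v" using line_eq_if_mem nonzero distinct by blast
  obtain a b where ab: "a \<in> F" "b \<in> F" "u = a v + b w" using coordinates_exist[OF nonzero(1) wv] .
  have a: "a \<noteq> (\<lambda>_. 0)"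
  proof
    assume "a = (\<lambda>_. 0)"
    then have "u \<in> line w" using ab scalar_in_line by simp
    then show False using line_eq_if_mem[OF nonzero(3)] distinct(3) by blast
  qed
  have b: "b \<noteq> (\<lambda>_. 0)"
  proof
    assume "b = (\<lambda>_. 0)"
    then have "u \<in> line v" using ab scalar_in_line by simp
    then show False using line_eq_if_mem[OF nonzero(3)] distinct(2) by blast
  qed
  obtain \<alpha> \<beta> \<gamma> where \<alpha>\<beta>\<gamma>: "\<alpha> \<in> F" "\<beta> \<in> F" "\<gamma> \<in> F" "r v = \<alpha> v" "r w = \<beta> w" "r u = \<gamma> u"
    using eigen by (auto simp: mem_line_iff)
  have "(a \<circ> \<alpha>) v + (b \<circ> \<beta>) w = r u"
    using r ab \<alpha>\<beta>\<gamma> by (simp add: mem_End_G_iff additive_apply)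
  also have "\<dots> = (a \<circ> \<gamma>) v + (b \<circ> \<gamma>) w"
    using ab \<alpha>\<beta>\<gamma> additive_F[of \<gamma>] by (simp add: additive_apply F_commute)
  finally have "a \<circ> \<alpha> = a \<circ> \<gamma>" "b \<circ> \<beta> = b \<circ> \<gamma>"
    using coordinates_unique[OF nonzero(1) wv comp_in_F[OF ab(1) \<alpha>\<beta>\<gamma>(1)] comp_in_F[OF ab(2) \<alpha>\<beta>\<gamma>(2)]
        comp_in_F[OF ab(1) \<alpha>\<beta>\<gamma>(3)] comp_in_F[OF ab(2) \<alpha>\<beta>\<gamma>(3)]]
    by blast+
  then have "\<alpha> = \<gamma>" "\<beta> = \<gamma>"
    using F_cancel_left ab a b by blast+
  then have "r = \<gamma>"
    using End_G_F_eq_on_basis[OF nonzero(1) wv r] F_subset_End_G_F \<alpha>\<beta>\<gamma> by auto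
  then show ?thesis using \<alpha>\<beta>\<gamma> by simp
qed

end


section \<open>Subalgebras of the endomorphisms of a plane\<close>

locale plane_algebra = F2_plane F for F :: "('v::ab_group_add \<Rightarrow> 'v) set" +
  fixes R :: "('v \<Rightarrow> 'v) set"
  assumes subalgebra: "K_subalgebra (endo_ring F) (\<lambda>e v. e v) R"
begin

lemma R_subset_End_G_F: "R \<subseteq> End_G F" and id_in_R: "id \<in> R"
  and add_in_R: "\<forall>r\<in>R. \<forall>s\<in>R. (\<lambda>x. r x + s x) \<in> R"
  and scalar_comp_in_R: "\<forall>c\<in>F. \<forall>r\<in>R. (\<lambda>x. c (r x)) \<in> R"
  and comp_in_R: "\<forall>r\<in>R. \<forall>s\<in>R. r \<circ> s \<in> R"
  using subalgebra unfolding K_subalgebra_def End_K_endo_ring by (simp_all add: endo_ring_def)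

lemma F_subset_R: "F \<subseteq> R"
  using scalar_comp_in_R id_in_R by fastforce

lemma additive_R: "r \<in> R \<Longrightarrow> additive r"
  using R_subset_End_G_F by (auto simp: mem_End_G_iff)

lemma R_commute_F: "r \<in> R \<Longrightarrow> a \<in> F \<Longrightarrow> r (a x) = a (r x)"
  using R_subset_End_G_F by (auto simp: mem_End_G_iff)

lemma F_subset_End_G_R: "F \<subseteq> End_G R"
  using R_commute_F additive_F by (auto simp: mem_End_G_iff)

lemma End_G_R_add: "f \<in> End_G R \<Longrightarrow> h \<in> End_G R \<Longrightarrow> (\<lambda>x. f x + h x) \<in> End_G R"
  using End_G_add additive_R by blast

definition stable_lines :: "'v set set" where
  "stable_lines = {line v | v. v \<noteq> 0 \<and> (\<forall>r\<in>R. r ` line v \<subseteq> line v)}"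

lemma eigen_if_stable_line: "line v \<in> stable_lines \<Longrightarrow> r \<in> R \<Longrightarrow> r v \<in> line v"
  unfolding stable_lines_def using self_in_line by blast

lemma card_stable_lines_le_2:
  assumes "\<not> R \<subseteq> F"
  shows "card stable_lines \<le> 2"
proof (rule ccontr)
  assume "\<not> card stable_lines \<le> 2"
  then obtain T where T: "T \<subseteq> stable_lines" "card T = 3"
    using obtain_subset_with_card_n[of 3 stable_lines] by auto
  then obtain L1 L2 L3 where L: "T = {L1, L2, L3}" "L1 \<noteq> L2" "L1 \<noteq> L3" "L2 \<noteq> L3"
    by (auto simp: card_3_iff)
  then have L_stable: "L1 \<in> stable_lines" "L2 \<in> stable_lines" "L3 \<in> stable_lines"
    using T(1) by auto
  then obtain v w u where "L1 = line v" "L2 = line w" "L3 = line u"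
    and nonzero: "v \<noteq> 0" "w \<noteq> 0" "u \<noteq> 0"
    unfolding stable_lines_def by blast
  then have distinct: "line v \<noteq> line w" "line v \<noteq> line u" "line w \<noteq> line u"
    and stable: "line v \<in> stable_lines" "line w \<in> stable_lines" "line u \<in> stable_lines"
    using L L_stable by simp_all
  obtain r where r: "r \<in> R" "r \<notin> F" using assms by blast
  have "r \<in> F"
    using scalar_if_three_eigenlines[OF _ nonzero distinct] eigen_if_stable_line[OF _ r(1)] stable
      R_subset_End_G_F r(1) by blast
  then show False using r(2) by contradiction
qed

lemma simple_module_if_no_stable_line:
  assumes "stable_lines = {}"
  shows "simple_module R"
  unfolding simple_module_def
proof (intro conjI allI impI)
  show "(UNIV :: 'v set) \<noteq> {0}" using exists_nonzero by blast
  fix W assume W: "F2_subspace W \<and> (\<forall>r\<in>R. r ` W \<subseteq> W)"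
  show "W = {0} \<or> W = UNIV"
  proof (cases "W = {0}")
    case False
    then obtain v where v: "v \<in> W" "v \<noteq> 0" using W by (auto simp: F2_subspace_def)
    have F_stable: "\<forall>a\<in>F. a ` W \<subseteq> W" using W F_subset_R by blast
    then have "line v \<subseteq> W" using v(1) by (auto simp: line_def)
    have "\<not> W \<subseteq> line v"
    proof
      assume "W \<subseteq> line v"
      with \<open>line v \<subseteq> W\<close> have "W = line v" by blast
      then have "line v \<in> stable_lines" unfolding stable_lines_def using W v(2) by blast
      then show False using assms by simp
    qed
    then show ?thesis using F_stable_subspace_eq_UNIV W F_stable v by blast
  qed simp
qed

lemma End_G_R_inj:
  assumes "simple_module R" "f \<in> End_G R" "f \<noteq> (\<lambda>_. 0)"
  shows "inj f"
  using simple_module_End_G_surj[OF assms] finite_surj_inj[of UNIV f] by simp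

lemma End_G_R_eq_if_eq_at:
  assumes "simple_module R" "f \<in> End_G R" "h \<in> End_G R" "v \<noteq> 0" "f v = h v"
  shows "f = h"
proof -
  let ?d = "\<lambda>x. f x + h x"
  have d: "?d \<in> End_G R" using End_G_R_add[OF assms(2,3)] .
  have "additive f" "additive h" using assms(2,3) by (simp_all add: mem_End_G_iff)
  then have "?d v = ?d 0"
    using assms(5) by (simp add: additive_zero char_two)
  then have "?d = (\<lambda>_. 0)" using End_G_R_inj[OF assms(1) d] assms(4) by (auto dest: injD)
  then show ?thesis by (auto simp: fun_eq_iff add_eq_0_iff_eq dest: fun_cong)
qed

lemma End_G_R_no_zero_divisors:
  assumes "simple_module R" "f \<in> End_G R" "h \<in> End_G R" "\<And>x. f (h x) = 0"
  shows "f = (\<lambda>_. 0) \<or> h = (\<lambda>_. 0)"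
proof (rule disjCI)
  assume "h \<noteq> (\<lambda>_. 0)"
  then obtain x where "h x \<noteq> 0" by auto
  moreover have "f (h x) = f 0"
    using assms(2,4) additive_zero[of f] by (simp add: mem_End_G_iff)
  ultimately show "f = (\<lambda>_. 0)" using End_G_R_inj[OF assms(1,2)] by (auto dest: injD)
qed

lemma End_G_R_quadratic:
  assumes "simple_module R" "f \<in> End_G R"
  obtains p q where "p \<in> F" "q \<in> F" "\<And>x. f (f x) = p x + q (f x)"
proof -
  obtain v :: 'v where v: "v \<noteq> 0" using exists_nonzero by blast
  show ?thesis
  proof (cases "f v \<in> line v")
    case True
    then obtain a where a: "a \<in> F" "f v = a v" by (auto simp: mem_line_iff)
    have "f = a"
      using End_G_R_eq_if_eq_at[of f a v] assms v a F_subset_End_G_R by blast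
    then show ?thesis using that[of "a \<circ> a" "\<lambda>_. 0"] a(1) comp_in_F zero_in_F by simp
  next
    case False
    then obtain p q where pq: "p \<in> F" "q \<in> F" "f (f v) = p v + q (f v)"
      using coordinates_exist[OF v] by metis
    have "f \<circ> f = (\<lambda>x. p x + q (f x))"
    proof (rule End_G_R_eq_if_eq_at[OF assms(1) _ _ v])
      show "f \<circ> f \<in> End_G R" using End_G_comp assms(2) by blast
      show "(\<lambda>x. p x + q (f x)) \<in> End_G R"
        using End_G_R_add End_G_comp[of q R f, unfolded comp_def] F_subset_End_G_R pq assms(2) by blast
    qed (use pq in simp)
    then show ?thesis using that pq by (metis comp_apply)
  qed
qed

lemma End_G_R_polynomial:
  assumes "simple_module R" "f \<in> End_G R" "v \<noteq> 0" "f v \<notin> line v" "h \<in> End_G R"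
  obtains a b where "a \<in> F" "b \<in> F" "h = (\<lambda>x. a x + b (f x))"
proof -
  obtain a b where ab: "a \<in> F" "b \<in> F" "h v = a v + b (f v)"
    using coordinates_exist[OF assms(3,4)] by metis
  have "h = (\<lambda>x. a x + b (f x))"
  proof (rule End_G_R_eq_if_eq_at[OF assms(1,5) _ assms(3)])
    show "(\<lambda>x. a x + b (f x)) \<in> End_G R"
      using End_G_R_add End_G_comp[of b R f, unfolded comp_def] F_subset_End_G_R ab assms(2) by blast
  qed (use ab in simp)
  then show ?thesis using that ab by blast
qed

text \<open>If \<open>h\<close> and \<open>f\<close> commute and satisfy \<open>y\<^sup>2 = p + q y\<close>, then
  \<open>(h + f)(h + f + q) = h\<^sup>2 + f\<^sup>2 + q (h + f) = 0\<close> in characteristic two.\<close>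

lemma End_G_R_common_quadratic:
  assumes "simple_module R" "f \<in> End_G R" "h \<in> End_G R" "\<And>x. h (f x) = f (h x)"
    and "p \<in> F" "q \<in> F"
    and "\<And>x. f (f x) = p x + q (f x)" "\<And>x. h (h x) = p x + q (h x)"
  shows "h = f \<or> h = (\<lambda>x. q x + f x)"
proof -
  let ?s = "\<lambda>x. h x + f x" and ?t = "\<lambda>x. h x + (q x + f x)"
  have qR: "q \<in> End_G R" using assms(6) F_subset_End_G_R by blast
  have s: "?s \<in> End_G R" and t: "?t \<in> End_G R"
    using End_G_R_add assms(2,3) qR by blast+
  have add: "additive h" "additive f" using assms(2,3) by (simp_all add: mem_End_G_iff)
  have commute_q: "h (q x) = q (h x)" "f (q x) = q (f x)" for x
    using assms(2,3) R_commute_F F_subset_R assms(6)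
    by (metis mem_End_G_iff subsetD)+
  have "?s (?t x) = 0" for x
    using assms(4,7,8)
    by (simp add: additive_apply[OF add(1)] additive_apply[OF add(2)] commute_q add_ac char_two)
  then have "?s = (\<lambda>_. 0) \<or> ?t = (\<lambda>_. 0)"
    using End_G_R_no_zero_divisors[OF assms(1) s t] by blast
  then show ?thesis by (auto simp: fun_eq_iff add_eq_0_iff_eq dest: fun_cong)
qed

lemma orbit_eq_UNIV:
  assumes "simple_module R" "(\<lambda>_. 0) \<in> S" "\<And>s t. s \<in> S \<Longrightarrow> t \<in> S \<Longrightarrow> (\<lambda>x. s x + t x) \<in> S"
    and "\<And>r s. r \<in> R \<Longrightarrow> s \<in> S \<Longrightarrow> r \<circ> s \<in> S" "s \<in> S" "s w \<noteq> 0"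
  shows "(\<lambda>s. s w) ` S = UNIV"
proof -
  let ?W = "(\<lambda>s. s w) ` S"
  have "F2_subspace ?W"
    unfolding F2_subspace_def using assms(2,3) by (auto intro!: image_eqI)
  moreover have "\<forall>r\<in>R. r ` ?W \<subseteq> ?W"
  proof (intro ballI subsetI)
    fix r y assume "r \<in> R" "y \<in> r ` ?W"
    then obtain s where "s \<in> S" "y = (r \<circ> s) w" by auto
    then show "y \<in> ?W" using assms(4)[OF \<open>r \<in> R\<close>] by blast
  qed
  moreover have "?W \<noteq> {0}" using assms(5,6) by blast
  ultimately show ?thesis using assms(1) unfolding simple_module_def by blast
qed

lemma End_G_R_map_if_annihilator_le:
  assumes "(\<lambda>r. r v) ` R = UNIV" "\<And>r. r \<in> R \<Longrightarrow> r v = 0 \<Longrightarrow> r w = 0"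
  obtains \<phi> where "\<phi> \<in> End_G R" "\<phi> v = w"
proof -
  have well_defined: "r w = r' w" if "r \<in> R" "r' \<in> R" "r v = r' v" for r r'
    using assms(2)[OF add_in_R[rule_format, OF that(1,2)]] that(3) by (simp add: add_eq_0_iff_eq)
  define \<phi> where "\<phi> x = (SOME r. r \<in> R \<and> r v = x) w" for x
  have \<phi>: "\<phi> (r v) = r w" if "r \<in> R" for r
  proof -
    have "(SOME r'. r' \<in> R \<and> r' v = r v) \<in> R \<and> (SOME r'. r' \<in> R \<and> r' v = r v) v = r v"
      by (rule someI[of _ r]) (use that in simp)
    then show ?thesis unfolding \<phi>_def using well_defined that by blast
  qed
  have onto: "\<exists>r\<in>R. x = r v" for x using assms(1) by (metis UNIV_I imageE)
  have "additive \<phi>"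
    unfolding additive_def
  proof (intro allI)
    fix x y
    obtain r s where "r \<in> R" "s \<in> R" "x = r v" "y = s v" using onto by metis
    then show "\<phi> (x + y) = \<phi> x + \<phi> y"
      using \<phi>[OF add_in_R[rule_format, of r s]] \<phi> by simp
  qed
  moreover have "\<phi> (s x) = s (\<phi> x)" if "s \<in> R" for s x
  proof -
    obtain r where "r \<in> R" "x = r v" using onto by metis
    then show ?thesis using \<phi>[OF comp_in_R[rule_format, OF that]] \<phi> by simp
  qed
  ultimately have "\<phi> \<in> End_G R" by (simp add: mem_End_G_iff)
  moreover have "\<phi> v = w" using \<phi>[OF id_in_R] by simp
  ultimately show ?thesis by (rule that)
qed

lemma orbit_R_eq_UNIV:
  assumes "simple_module R" "v \<noteq> 0"
  shows "(\<lambda>r. r v) ` R = UNIV"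
  by (rule orbit_eq_UNIV[OF assms(1) _ _ _ id_in_R])
    (use zero_in_F F_subset_R add_in_R comp_in_R assms(2) in auto)

lemma orbit_annihilator_eq_UNIV:
  assumes simple: "simple_module R" and commutant: "End_G R \<subseteq> F"
    and "v \<noteq> 0" "w \<notin> line v"
  shows "(\<lambda>r. r w) ` {r \<in> R. r v = 0} = UNIV"
proof -
  have "\<exists>r\<in>R. r v = 0 \<and> r w \<noteq> 0"
  proof (rule ccontr)
    assume "\<not> ?thesis"
    then obtain \<phi> where "\<phi> \<in> End_G R" "\<phi> v = w"
      using End_G_R_map_if_annihilator_le[OF orbit_R_eq_UNIV[OF simple assms(3)]] by blast
    then show False using assms(4) commutant scalar_in_line by blast
  qed
  then obtain a where a: "a \<in> R" "a v = 0" "a w \<noteq> 0" by blast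
  show ?thesis
  proof (rule orbit_eq_UNIV[OF simple])
    show "(\<lambda>_. 0) \<in> {r \<in> R. r v = 0}" using zero_in_F F_subset_R by blast
    show "(\<lambda>x. s x + t x) \<in> {r \<in> R. r v = 0}" if "s \<in> {r \<in> R. r v = 0}" "t \<in> {r \<in> R. r v = 0}"
      for s t using that add_in_R by simp
    show "r \<circ> s \<in> {r \<in> R. r v = 0}" if "r \<in> R" "s \<in> {r \<in> R. r v = 0}" for r s
      using that comp_in_R additive_zero[OF additive_R[OF that(1)]] by simp
    show "a \<in> {r \<in> R. r v = 0}" using a by simp
  qed (rule a(3))
qed

text \<open>Jacobson's density theorem in dimension two.\<close>

theorem eq_End_G_F_if_simple:
  assumes simple: "simple_module R" and commutant: "End_G R \<subseteq> F"
  shows "R = End_G F"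
proof
  show "R \<subseteq> End_G F" by (rule R_subset_End_G_F)
  show "End_G F \<subseteq> R"
  proof
    fix f assume f: "f \<in> End_G F"
    obtain v :: 'v where v: "v \<noteq> 0" using exists_nonzero by blast
    obtain w where w: "w \<notin> line v" using exists_not_in_line by blast
    have "f v \<in> (\<lambda>r. r v) ` R" using orbit_R_eq_UNIV[OF simple v] by simp
    then obtain r1 where r1: "r1 \<in> R" "f v = r1 v" by blast
    have "f w + r1 w \<in> (\<lambda>r. r w) ` {r \<in> R. r v = 0}"
      using orbit_annihilator_eq_UNIV[OF simple commutant v w] by simp
    then obtain r2 where r2: "r2 \<in> R" "r2 v = 0" "f w + r1 w = r2 w" by blast
    have r: "(\<lambda>x. r1 x + r2 x) \<in> R" using r1 r2 add_in_R by blast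
    have "f = (\<lambda>x. r1 x + r2 x)"
    proof (rule End_G_F_eq_on_basis[OF v w f])
      show "(\<lambda>x. r1 x + r2 x) \<in> End_G F" using r R_subset_End_G_F by blast
      show "f v = r1 v + r2 v" using r1 r2 by simp
      have "r1 w + r2 w = r1 w + (r1 w + f w)" using r2(3) by (simp only: add.commute)
      then show "f w = r1 w + r2 w" by (simp only: add_self_left)
    qed
    then show "f \<in> R" using r by simp
  qed
qed

end


section \<open>Algebras normalised by a perfect group\<close>

locale perfect_plane_rep = F2_plane "End_G G" for G :: "('v::ab_group_add \<Rightarrow> 'v) set" +
  assumes subgroup_G: "is_subgroup_Aut G"
    and perfect_G: "derived (fun_group G) G = G"
    and simple_G: "simple_module G"
begin

lemma bij_G: "g \<in> G \<Longrightarrow> bij g" and additive_G: "g \<in> G \<Longrightarrow> additive g"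
  and inv_in_G: "g \<in> G \<Longrightarrow> inv_into UNIV g \<in> G"
  using subgroup_G by (auto simp: is_subgroup_Aut_def Aut_F2_def)

lemma inv_G_apply [simp]:
  "g \<in> G \<Longrightarrow> inv_into UNIV g (g x) = x" "g \<in> G \<Longrightarrow> g (inv_into UNIV g x) = x"
  using bij_G by (auto simp: bij_def surj_f_inv_f)

lemma G_commute_End_G: "g \<in> G \<Longrightarrow> c \<in> End_G G \<Longrightarrow> g (c x) = c (g x)"
  by (simp add: mem_End_G_iff)

lemma G_subset_End_G_F: "G \<subseteq> End_G (End_G G)"
  using G_commute_End_G additive_G by (auto simp: mem_End_G_iff)

lemma G_action_on_card_le_2_trivial:
  assumes "finite X" "card X \<le> 2"
    and "\<And>g x. g \<in> G \<Longrightarrow> x \<in> X \<Longrightarrow> \<alpha> g x \<in> X"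
    and "\<And>g h x. g \<in> G \<Longrightarrow> h \<in> G \<Longrightarrow> x \<in> X \<Longrightarrow> \<alpha> (g \<circ> h) x = \<alpha> g (\<alpha> h x)"
    and "\<And>x. x \<in> X \<Longrightarrow> \<alpha> id x = x"
    and "g \<in> G" "x \<in> X"
  shows "\<alpha> g x = x"
  using group.perfect_action_on_card_le_2_trivial[OF group_fun_group[OF subgroup_G], of X \<alpha> g x]
    perfect_G assms by (simp add: fun_group_def)

end

locale normalised_plane_algebra =
  perfect_plane_rep G + plane_algebra "End_G G" R
  for G :: "('v::ab_group_add \<Rightarrow> 'v) set" and R +
  assumes conj_in_R: "\<And>g r. g \<in> G \<Longrightarrow> r \<in> R \<Longrightarrow> g \<circ> r \<circ> inv_into UNIV g \<in> R"
begin

lemma inv_conj_in_R: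
  assumes "g \<in> G" "r \<in> R"
  shows "inv_into UNIV g \<circ> r \<circ> g \<in> R"
  using conj_in_R[OF inv_in_G[OF assms(1)] assms(2)] inv_inv_eq[OF bij_G[OF assms(1)]] by simp

lemma image_stable_line:
  assumes "g \<in> G" "L \<in> stable_lines"
  shows "g ` L \<in> stable_lines"
proof -
  obtain v where v: "v \<noteq> 0" "L = line v" and stable: "\<forall>r\<in>R. r ` L \<subseteq> L"
    using assms(2) by (auto simp: stable_lines_def)
  have gL: "g ` L = line (g v)" using image_line G_subset_End_G_F assms(1) v(2) by blast
  have "g v \<noteq> 0"
  proof
    assume "g v = 0"
    then have "v = inv_into UNIV g 0" using inv_G_apply(1)[OF assms(1), of v] by simp
    then show False using v(1) additive_zero[OF additive_G[OF inv_in_G[OF assms(1)]]] by simp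
  qed
  moreover have "r ` g ` L \<subseteq> g ` L" if "r \<in> R" for r
  proof
    fix y assume "y \<in> r ` g ` L"
    then obtain x where x: "x \<in> L" "y = r (g x)" by blast
    have "(inv_into UNIV g \<circ> r \<circ> g) x \<in> L" using stable inv_conj_in_R[OF assms(1) that] x(1) by blast
    moreover have "y = g ((inv_into UNIV g \<circ> r \<circ> g) x)" using x(2) assms(1) by simp
    ultimately show "y \<in> g ` L" by blast
  qed
  ultimately show ?thesis unfolding gL stable_lines_def by blast
qed

lemma no_stable_line:
  assumes "\<not> R \<subseteq> End_G G"
  shows "stable_lines = {}"
proof (rule ccontr)
  assume "stable_lines \<noteq> {}"
  then obtain L where L: "L \<in> stable_lines" by blast
  have finite: "finite stable_lines"
    by (rule finite_subset[OF subset_UNIV]) (simp add: Finite_Set.finite_set)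
  have "g ` L = L" if "g \<in> G" for g
    by (rule G_action_on_card_le_2_trivial[of stable_lines "\<lambda>g L. g ` L", OF finite
          card_stable_lines_le_2[OF assms] image_stable_line _ _ that L])
      (simp_all add: image_comp)
  moreover obtain v where v: "v \<noteq> 0" "L = line v" using L by (auto simp: stable_lines_def)
  ultimately have "L = {0} \<or> L = UNIV"
    using simple_G F2_subspace_line unfolding simple_module_def by auto
  then show False using v self_in_line line_neq_UNIV by blast
qed

lemma conj_End_G_R:
  assumes "f \<in> End_G R" "g \<in> G"
  shows "g \<circ> f \<circ> inv_into UNIV g \<in> End_G R"
  unfolding mem_End_G_iff
proof (intro conjI ballI allI)
  show "additive (g \<circ> f \<circ> inv_into UNIV g)"
    using assms additive_G[OF inv_in_G] additive_G by (simp add: mem_End_G_iff additive_def)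
  fix r x assume r: "r \<in> R"
  let ?r' = "inv_into UNIV g \<circ> r \<circ> g"
  have "f (inv_into UNIV g (r x)) = f (?r' (inv_into UNIV g x))" using assms(2) by simp
  also have "\<dots> = ?r' (f (inv_into UNIV g x))"
    using assms(1) inv_conj_in_R[OF assms(2) r] unfolding mem_End_G_iff by blast
  finally show "(g \<circ> f \<circ> inv_into UNIV g) (r x) = r ((g \<circ> f \<circ> inv_into UNIV g) x)"
    using assms(2) by simp
qed

lemma conj_End_G_R_mem_roots:
  assumes simple: "simple_module R" and f: "f \<in> End_G R"
    and v: "v \<noteq> 0" "f v \<notin> line v"
    and pq: "p \<in> End_G G" "q \<in> End_G G" "\<And>x. f (f x) = p x + q (f x)"
    and g: "g \<in> G"
  shows "g \<circ> f \<circ> inv_into UNIV g \<in> {f, \<lambda>x. q x + f x}"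
proof -
  let ?h = "g \<circ> f \<circ> inv_into UNIV g"
  have h: "?h \<in> End_G R" using conj_End_G_R[OF f g] .
  obtain a b where ab: "a \<in> End_G G" "b \<in> End_G G" "?h = (\<lambda>x. a x + b (f x))"
    using End_G_R_polynomial[OF simple f v h] by blast
  have "a \<in> R" "b \<in> R" using ab(1,2) F_subset_R by blast+
  then have "f (a y) = a (f y)" "f (b y) = b (f y)" "additive f" for y
    using f by (simp_all add: mem_End_G_iff)
  then have "?h (f x) = f (?h x)" for x
    by (simp add: ab(3) additive_apply)
  moreover have "?h (?h x) = p x + q (?h x)" for x
    using pq(3) by (simp add: additive_apply[OF additive_G[OF g]] G_commute_End_G[OF g pq(1)]
        G_commute_End_G[OF g pq(2)] g)
  ultimately show ?thesis
    using End_G_R_common_quadratic[OF simple f h _ pq(1,2) pq(3)] by blast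
qed

lemma conj_End_G_R_eq_self:
  assumes simple: "simple_module R" and f: "f \<in> End_G R"
    and v: "v \<noteq> 0" "f v \<notin> line v" and g: "g \<in> G"
  shows "g \<circ> f \<circ> inv_into UNIV g = f"
proof -
  obtain p q where pq: "p \<in> End_G G" "q \<in> End_G G" "\<And>x. f (f x) = p x + q (f x)"
    using End_G_R_quadratic[OF simple f] by blast
  let ?conj = "\<lambda>g y. g \<circ> y \<circ> inv_into UNIV g"
  show ?thesis
  proof (rule G_action_on_card_le_2_trivial[of "{f, \<lambda>x. q x + f x}" ?conj, OF _ _ _ _ _ g])
    show "card {f, \<lambda>x. q x + f x} \<le> 2" by (simp add: card_insert_if)
    show "?conj h y \<in> {f, \<lambda>x. q x + f x}" if "h \<in> G" "y \<in> {f, \<lambda>x. q x + f x}" for h y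
    proof -
      have "?conj h (\<lambda>x. q x + f x) = (\<lambda>x. q x + ?conj h f x)"
        by (simp add: fun_eq_iff additive_apply[OF additive_G[OF that(1)]]
            G_commute_End_G[OF that(1) pq(2)] that(1))
      then show ?thesis
        using that conj_End_G_R_mem_roots[OF simple f v pq that(1)] by (auto simp: fun_eq_iff)
    qed
    show "?conj (h \<circ> k) y = ?conj h (?conj k y)" if "h \<in> G" "k \<in> G" for h k y
      using o_inv_distrib[OF bij_G[OF that(1)] bij_G[OF that(2)]] by (simp add: o_assoc)
  qed simp_all
qed

lemma End_G_R_subset_F:
  assumes simple: "simple_module R"
  shows "End_G R \<subseteq> End_G G"
proof
  fix f assume f: "f \<in> End_G R"
  obtain v :: 'v where v: "v \<noteq> 0" using exists_nonzero by blast
  show "f \<in> End_G G"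
  proof (cases "f v \<in> line v")
    case True
    then obtain a where a: "a \<in> End_G G" "f v = a v" by (auto simp: mem_line_iff)
    then have "f = a"
      using End_G_R_eq_if_eq_at[of f a v] simple f v F_subset_End_G_R by blast
    then show ?thesis using a(1) by simp
  next
    case False
    have "f (g x) = g (f x)" if "g \<in> G" for g x
    proof -
      have "f (g x) = (g \<circ> f \<circ> inv_into UNIV g) (g x)"
        using conj_End_G_R_eq_self[OF simple f v False that] by simp
      also have "\<dots> = g (f x)" using that by simp
      finally show ?thesis .
    qed
    then show ?thesis using f by (auto simp: mem_End_G_iff)
  qed
qed

theorem eq_scalars_or_End_G_F: "R = End_G G \<or> R = End_G (End_G G)"
proof (cases "R \<subseteq> End_G G")
  case True
  then show ?thesis using F_subset_R by blast
next
  case False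
  have "simple_module R"
    using simple_module_if_no_stable_line no_stable_line[OF False] by blast
  then show ?thesis using eq_End_G_F_if_simple End_G_R_subset_F by blast
qed

end


theorem very_simple_if_perfect_plane:
  fixes G :: "('v::ab_group_add \<Rightarrow> 'v) set"
  assumes "\<And>x::'v. x + x = 0" "is_subgroup_Aut G" "derived (fun_group G) G = G"
    and "simple_module G" "field (End_G_ring G)" "finite (End_G G)"
    and "card (UNIV :: 'v set) = card (End_G G) ^ 2"
  shows "very_simple (End_G_ring G) (\<lambda>e v. e v) G"
  unfolding very_simple_def
proof (intro allI impI)
  fix R
  assume R: "K_subalgebra (End_G_ring G) (\<lambda>e v. e v) R \<and>
    (\<forall>g\<in>G. \<forall>r\<in>R. g \<circ> r \<circ> inv_into UNIV g \<in> R)"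
  have "F2_plane (End_G G)"
    using assms unfolding F2_plane_def by (simp add: End_G_ring_eq_endo_ring mem_End_G_iff)
  then interpret normalised_plane_algebra G R
    using assms R
    by (intro normalised_plane_algebra.intro perfect_plane_rep.intro plane_algebra.intro)
      (simp_all add: perfect_plane_rep_axioms_def plane_algebra_axioms_def
        normalised_plane_algebra_axioms_def End_G_ring_eq_endo_ring)
  have "{(\<lambda>x. c x) | c. c \<in> carrier (End_G_ring G)} = End_G G"
    by (simp add: End_G_ring_def)
  then show "R = {(\<lambda>x. c x) | c. c \<in> carrier (End_G_ring G)} \<or>
      R = End_K (End_G_ring G) (\<lambda>e v. e v)"
    using eq_scalars_or_End_G_F by (simp add: End_G_ring_eq_endo_ring End_K_endo_ring)
qed

theorem corollary4p2:
  fixes G :: "('v::ab_group_add \<Rightarrow> 'v) set"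
  assumes two_torsion: "\<forall>x::'v. x + x = 0"
    and dim2: "card (UNIV :: 'v set) = 2 ^ (2 * 2)"
    and subgrp: "is_subgroup_Aut G"
    and A5: "fun_group G \<cong> alt_group 5"
    and simple: "simple_module G"
    and F4: "field (End_G_ring G)" "card (carrier (End_G_ring G)) = 4"
  shows "very_simple (End_G_ring G) (\<lambda>e v. e v) G"
proof (rule very_simple_if_perfect_plane)
  have "derived (fun_group G) (carrier (fun_group G)) = carrier (fun_group G)"
    using perfect_if_iso_perfect[OF group_fun_group[OF subgrp] alt_group_is_group A5]
      derived_alt_group_const[of 5] by simp
  then show "derived (fun_group G) G = G" by (simp add: fun_group_def)
  have "card (End_G G) = 4" using F4(2) by (simp add: End_G_ring_def)
  then show "finite (End_G G)" "card (UNIV :: 'v set) = card (End_G G) ^ 2"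
    using dim2 card.infinite by fastforce+
qed (use assms in auto)

end
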